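(* Let $\eta>0$ and let $\mathcal{H}$ be the Paley-Wiener space on $\mathbb{R}^d$ with parameter $\eta$, i.e. the space of functions $f\in\mathcal{L}^2(\mathbb{R}^d)$ whose Fourier transform is supported in $[-\eta,\eta]^d$, equipped with the $\mathcal{L}^2$ norm, so that $\|f\|_{\mathcal{H}}^2=\int_{\mathbb{R}^d} f^2(s)\,\mathrm{d}s$. Let $f_*\in\mathcal{H}$. Let $x_1,\dots,x_{n_0}$ ($n_0\ge 1$) be i.i.d. $\mathbb{R}^d$-valued random vectors with an absolutely continuous distribution whose density $h_*$ is known and satisfies $h_*(x)>0$ for all $x\in\mathbb{R}^d$, and suppose there is a constant $\varrho>0$ with $f_*^2(x)\le \varrho\, h_*(x)$ for all $x\in\mathbb{R}^d$. Let $\beta\in(0,1)$ and let $\mathcal{Z}\subseteq\mathbb{R}^{n_0}$ be a random (bounded) confidence ellipsoid satisfying $$\mathbb{P}\big((f_*(x_1),\dots,f_*(x_{n_0}))^{\mathrm{T}}\in\mathcal{Z}\big)\ge 1-\beta,$$ and let $\xi^*$ be the optimal value of the problem of maximizing $\frac{1}{n_0}\sum_{k=1}^{n_0} z_k^2/h_*(x_k)$ subject to $z=(z_1,\dots,z_{n_0})^{\mathrm{T}}\in\mathcal{Z}$. Let $U$ be a random variable uniformly distributed on $(0,1)$ and independent of $x_1,\dots,x_{n_0}$. For $\alpha\in(0,1)$ define $$\phi(\sigma,\alpha,n,u)\doteq \sigma\sqrt{\frac{2\ln(1/\alpha)}{n}}+\sigma\frac{\ln(u)}{\sqrt{2n\ln(1/\alpha)}},$$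 $$\tau_{\mathtt{u}}\doteq \xi^*+\phi(\varrho/2,\alpha,n_0,U),\qquad \tau_0\doteq \xi^*+\varrho\sqrt{\ln(1/\alpha)/(2n_0)}.$$ Then $\mathbb{P}\big(\|f_*\|_{\mathcal{H}}^2\le \tau_{\mathtt{u}}\big)\ge 1-\alpha-\beta$, and moreover $\mathbb{P}(\tau_{\mathtt{u}}<\tau_0)=1$.
   Context: $\tau_0$ is the earlier (non-randomized Hoeffding-based) upper bound on the squared kernel norm $\|f_*\|_{\mathcal{H}}^2$; $\tau_{\mathtt{u}}$ is the uniformly-randomized version. The ellipsoid $\mathcal{Z}$ may be constructed from noisy observations $y_k=f_*(x_k)+\varepsilon_k$ (e.g. by a kernel-based method); only its stated coverage property is used. *)

theory Defs
  imports "HOL-Probability.Probability"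
begin

text \<open>Paley-Wiener space on the euclidean space 'a with parameter eta:
  real-valued square-integrable functions whose Fourier transform is supported in the
  cube [-eta,eta]^d, i.e. f is the inverse Fourier transform of a square-integrable
  function g supported on the cube (taken in its continuous representative).
  Fourier convention: exponent i<w,x>; constants are absorbed into g.\<close>

definition pw_cube :: "real \<Rightarrow> 'a::euclidean_space set" where
  "pw_cube \<eta> = cbox (- (\<eta> *\<^sub>R One)) (\<eta> *\<^sub>R One)"

definition paley_wiener :: "real \<Rightarrow> ('a::euclidean_space \<Rightarrow> real) \<Rightarrow> bool" where
  "paley_wiener \<eta> f \<longleftrightarrow>
     f \<in> borel_measurable lborel \<and> integrable lborel (\<lambda>s. (f s)^2) \<and>
     (\<exists>g :: 'a \<Rightarrow> complex. g \<in> borel_measurable lborel \<and>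
        set_integrable lborel (pw_cube \<eta>) (\<lambda>w. (cmod (g w))^2) \<and>
        (\<forall>x. complex_of_real (f x) =
              (LINT w : pw_cube \<eta> | lborel. g w * cis (w \<bullet> x))))"

definition pw_norm_sq :: "('a::euclidean_space \<Rightarrow> real) \<Rightarrow> real" where
  "pw_norm_sq f = (\<integral>s. (f s)^2 \<partial>lborel)"

definition is_ellipsoid :: "(real^'n::finite) set \<Rightarrow> bool" where
  "is_ellipsoid Z \<longleftrightarrow> (\<exists>c (A :: real^'n^'n). transpose A = A \<and>
      (\<forall>v. v \<noteq> 0 \<longrightarrow> v \<bullet> (A *v v) > 0) \<and>
      Z = {z. (z - c) \<bullet> (A *v (z - c)) \<le> 1})"

definition xi_star :: "(real^'n::finite) set \<Rightarrow> ('a \<Rightarrow> real) \<Rightarrow> ('n \<Rightarrow> 'a) \<Rightarrow> real" where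
  "xi_star Z h x = Sup ((\<lambda>z. (1 / real CARD('n)) * (\<Sum>k\<in>UNIV. (z $ k)^2 / h (x k))) ` Z)"

definition phi :: "real \<Rightarrow> real \<Rightarrow> real \<Rightarrow> real \<Rightarrow> real" where
  "phi \<sigma> \<alpha> n u = \<sigma> * sqrt (2 * ln (1 / \<alpha>) / n) + \<sigma> * ln u / sqrt (2 * n * ln (1 / \<alpha>))"

definition tau_u :: "real \<Rightarrow> real \<Rightarrow> real \<Rightarrow> real \<Rightarrow> real \<Rightarrow> real" where
  "tau_u \<xi> \<rho> \<alpha> n u = \<xi> + phi (\<rho> / 2) \<alpha> n u"

definition tau_0 :: "real \<Rightarrow> real \<Rightarrow> real \<Rightarrow> real \<Rightarrow> real" where
  "tau_0 \<xi> \<rho> \<alpha> n = \<xi> + \<rho> * sqrt (ln (1 / \<alpha>) / (2 * n))"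

end

theory Submission
  imports Defs
begin

text \<open>With \<open>g = f\<^sup>2 / h\<close>, the importance weights \<open>g (x\<^sub>k)\<close> are independent, lie in
  \<open>[0, \<rho>]\<close> because \<open>f\<^sup>2 \<le> \<rho> h\<close>, and have mean \<open>\<integral> f\<^sup>2\<close>, the squared norm; whenever the
  ellipsoid contains \<open>(f (x\<^sub>k))\<^sub>k\<close>, their empirical mean is at most \<open>\<xi>\<^sup>*\<close>.
  For \<open>U\<close> uniform on \<open>(0, 1)\<close> and independent of a weight \<open>Q \<ge> 0\<close> one has \<open>P (U < Q) \<le> E Q\<close>,
  a randomized Markov inequality without the usual threshold. Applied to the Chernoff weight
  \<open>Q = exp (s (\<integral> f\<^sup>2 - mean) - 2 ln (1/\<alpha>))\<close> together with Hoeffding's lemma, it shows that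
  \<open>\<integral> f\<^sup>2\<close> exceeds \<open>mean + phi (\<rho>/2) \<alpha> n U\<close> with probability at most \<open>\<alpha>\<close>, and a union bound
  with the coverage event gives the first claim. The second holds because \<open>tau_u - tau_0\<close> is a
  positive multiple of \<open>ln U < 0\<close>.\<close>

lemma AE_uniform_in_unit_interval:
  fixes U :: "'a \<Rightarrow> real"
  assumes "distributed M lborel U (\<lambda>u. ennreal (indicator {0<..<1} u))"
  shows "AE \<omega> in M. U \<omega> \<in> {0<..<1}"
proof (rule AE_distrD[OF distributed_measurable[OF assms]])
  show "AE u in distr M lborel U. u \<in> {0<..<1}"
    unfolding distributed_distr_eq_density[OF assms] by (subst AE_density) (auto split: split_indicator)
qed

lemma emeasure_uniform_lessThan_le:
  fixes U :: "'a \<Rightarrow> real"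
  assumes "distributed M lborel U (\<lambda>u. ennreal (indicator {0<..<1} u))"
  shows "emeasure (distr M lborel U) {..<y} \<le> ennreal y"
proof -
  have "emeasure (distr M lborel U) {..<y} = (\<integral>\<^sup>+u\<in>{..<y}. ennreal (indicator {0<..<1} u) \<partial>lborel)"
    unfolding distributed_distr_eq_density[OF assms] by (simp add: emeasure_density)
  also have "\<dots> \<le> (\<integral>\<^sup>+u. indicator {0..y} u \<partial>lborel)"
    by (intro nn_integral_mono) (simp split: split_indicator)
  also have "\<dots> = ennreal y"
    by (cases "0 \<le> y") (simp_all add: ennreal_neg)
  finally show ?thesis .
qed

lemma (in prob_space) distr_pair_eq_pair_measure_distr:
  assumes X[measurable]: "random_variable S X" and Y[measurable]: "random_variable T Y"
    and product: "\<And>A B. A \<in> sets S \<Longrightarrow> B \<in> sets T \<Longrightarrow>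
      prob {\<omega> \<in> space M. X \<omega> \<in> A \<and> Y \<omega> \<in> B} =
      prob {\<omega> \<in> space M. X \<omega> \<in> A} * prob {\<omega> \<in> space M. Y \<omega> \<in> B}"
  shows "distr M (S \<Otimes>\<^sub>M T) (\<lambda>\<omega>. (X \<omega>, Y \<omega>)) = distr M S X \<Otimes>\<^sub>M distr M T Y"
proof (rule pair_measure_eqI[symmetric])
  interpret PX: prob_space "distr M S X" by (rule prob_space_distr) fact
  interpret PY: prob_space "distr M T Y" by (rule prob_space_distr) fact
  show "sigma_finite_measure (distr M S X)" "sigma_finite_measure (distr M T Y)"
    by unfold_locales
  show "sets (distr M S X \<Otimes>\<^sub>M distr M T Y) = sets (distr M (S \<Otimes>\<^sub>M T) (\<lambda>\<omega>. (X \<omega>, Y \<omega>)))"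
    by (simp cong: sets_pair_measure_cong)
next
  fix A B assume "A \<in> sets (distr M S X)" "B \<in> sets (distr M T Y)"
  then have [measurable]: "A \<in> sets S" "B \<in> sets T" by simp_all
  have "emeasure (distr M (S \<Otimes>\<^sub>M T) (\<lambda>\<omega>. (X \<omega>, Y \<omega>))) (A \<times> B)
      = prob {\<omega> \<in> space M. X \<omega> \<in> A \<and> Y \<omega> \<in> B}"
    by (simp add: emeasure_distr emeasure_eq_measure vimage_def Int_def conj_commute)
  moreover have "emeasure (distr M S X) A = prob {\<omega> \<in> space M. X \<omega> \<in> A}"
    by (simp add: emeasure_distr emeasure_eq_measure vimage_def Int_def conj_commute)
  moreover have "emeasure (distr M T Y) B = prob {\<omega> \<in> space M. Y \<omega> \<in> B}"
    by (simp add: emeasure_distr emeasure_eq_measure vimage_def Int_def conj_commute)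
  ultimately show "emeasure (distr M S X) A * emeasure (distr M T Y) B
      = emeasure (distr M (S \<Otimes>\<^sub>M T) (\<lambda>\<omega>. (X \<omega>, Y \<omega>))) (A \<times> B)"
    by (simp add: product ennreal_mult)
qed

lemma (in prob_space) prob_product_compose:
  assumes X: "random_variable S X" and G: "G \<in> measurable S S'"
    and product: "\<And>A B. A \<in> sets S \<Longrightarrow> B \<in> sets T \<Longrightarrow>
      prob {\<omega> \<in> space M. X \<omega> \<in> A \<and> Y \<omega> \<in> B} =
      prob {\<omega> \<in> space M. X \<omega> \<in> A} * prob {\<omega> \<in> space M. Y \<omega> \<in> B}"
    and A: "A \<in> sets S'" and B: "B \<in> sets T"
  shows "prob {\<omega> \<in> space M. G (X \<omega>) \<in> A \<and> Y \<omega> \<in> B} =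
      prob {\<omega> \<in> space M. G (X \<omega>) \<in> A} * prob {\<omega> \<in> space M. Y \<omega> \<in> B}"
proof -
  have "{\<omega> \<in> space M. G (X \<omega>) \<in> A \<and> Y \<omega> \<in> B} = {\<omega> \<in> space M. X \<omega> \<in> G -` A \<inter> space S \<and> Y \<omega> \<in> B}"
    and "{\<omega> \<in> space M. G (X \<omega>) \<in> A} = {\<omega> \<in> space M. X \<omega> \<in> G -` A \<inter> space S}"
    using measurable_space[OF X] by auto
  then show ?thesis
    using product[OF measurable_sets[OF G A] B] by simp
qed

lemma (in prob_space) emeasure_uniform_less_le_nn_integral:
  fixes U :: "'a \<Rightarrow> real"
  assumes W[measurable]: "random_variable S W"
    and U: "distributed M lborel U (\<lambda>u. ennreal (indicator {0<..<1} u))"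
    and independent: "\<And>A B. A \<in> sets S \<Longrightarrow> B \<in> sets borel \<Longrightarrow>
      prob {\<omega> \<in> space M. W \<omega> \<in> A \<and> U \<omega> \<in> B} =
      prob {\<omega> \<in> space M. W \<omega> \<in> A} * prob {\<omega> \<in> space M. U \<omega> \<in> B}"
    and Q[measurable]: "Q \<in> borel_measurable S"
  shows "emeasure M {\<omega> \<in> space M. U \<omega> < Q (W \<omega>)} \<le> (\<integral>\<^sup>+\<omega>. ennreal (Q (W \<omega>)) \<partial>M)"
proof -
  have U_meas[measurable]: "U \<in> measurable M lborel"
    using U by (rule distributed_measurable)
  interpret PU: prob_space "distr M lborel U" by (rule prob_space_distr) fact
  define T where "T = {p \<in> space (S \<Otimes>\<^sub>M lborel). snd p < Q (fst p)}"
  have T[measurable]: "T \<in> sets (S \<Otimes>\<^sub>M lborel)" unfolding T_def by measurable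
  have "emeasure M {\<omega> \<in> space M. U \<omega> < Q (W \<omega>)}
      = emeasure (distr M (S \<Otimes>\<^sub>M lborel) (\<lambda>\<omega>. (W \<omega>, U \<omega>))) T"
    by (subst emeasure_distr)
       (auto simp: T_def space_pair_measure measurable_space[OF W] intro!: arg_cong[where f="emeasure M"])
  also have "\<dots> = emeasure (distr M S W \<Otimes>\<^sub>M distr M lborel U) T"
    by (subst distr_pair_eq_pair_measure_distr[OF W U_meas independent]) simp_all
  also have "\<dots> = (\<integral>\<^sup>+x. emeasure (distr M lborel U) (Pair x -` T) \<partial>distr M S W)"
    by (rule PU.emeasure_pair_measure_alt) (use T in simp)
  also have "\<dots> \<le> (\<integral>\<^sup>+x. ennreal (Q x) \<partial>distr M S W)"
  proof (rule nn_integral_mono)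
    fix x assume "x \<in> space (distr M S W)"
    then have "Pair x -` T = {..<Q x}" by (auto simp: T_def space_pair_measure)
    then show "emeasure (distr M lborel U) (Pair x -` T) \<le> ennreal (Q x)"
      using emeasure_uniform_lessThan_le[OF U] by simp
  qed
  also have "\<dots> = (\<integral>\<^sup>+\<omega>. ennreal (Q (W \<omega>)) \<partial>M)"
    by (simp add: nn_integral_distr)
  finally show ?thesis .
qed

lemma (in indep_interval_bounded_random_variables) nn_integral_exp_sum_centered_le:
  assumes l: "l > 0"
  shows "(\<integral>\<^sup>+x. ennreal (exp (l * (\<Sum>i\<in>I. X i x - expectation (X i)))) \<partial>M)
           \<le> ennreal (exp (l\<^sup>2 * (\<Sum>i\<in>I. (b i - a i)\<^sup>2) / 8))"
proof -
  have "(\<integral>\<^sup>+x. ennreal (exp (l * (\<Sum>i\<in>I. X i x - expectation (X i)))) \<partial>M) =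
        (\<integral>\<^sup>+x. (\<Prod>i\<in>I. ennreal (exp (l * (X i x - expectation (X i))))) \<partial>M)"
    by (intro nn_integral_cong) (simp add: sum_distrib_left exp_sum fin prod_ennreal)
  also have "\<dots> = (\<Prod>i\<in>I. \<integral>\<^sup>+x. ennreal (exp (l * (X i x - expectation (X i)))) \<partial>M)"
    by (intro indep_vars_nn_integral fin indep_vars_compose2[OF indep]) auto
  also have "\<dots> \<le> (\<Prod>i\<in>I. ennreal (exp (l\<^sup>2 * (b i - a i)\<^sup>2 / 8)))"
  proof (intro prod_mono_ennreal)
    fix i assume "i \<in> I"
    then interpret interval_bounded_random_variable M "X i" "a i" "b i" ..
    show "(\<integral>\<^sup>+x. ennreal (exp (l * (X i x - expectation (X i)))) \<partial>M) \<le> ennreal (exp (l\<^sup>2 * (b i - a i)\<^sup>2 / 8))"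
      by (rule Hoeffdings_lemma_nn_integral) (rule l)
  qed
  also have "\<dots> = ennreal (exp (l\<^sup>2 * (\<Sum>i\<in>I. (b i - a i)\<^sup>2) / 8))"
    by (simp add: prod_ennreal exp_sum fin sum_distrib_left sum_divide_distrib)
  finally show ?thesis .
qed

lemma (in prob_space) nn_integral_exp_sum_lower_deviation_le:
  fixes Y :: "'i \<Rightarrow> 'a \<Rightarrow> real" and a b \<mu> l :: real
  assumes I: "finite I" and indep: "indep_vars (\<lambda>_. borel) Y I"
    and bounded: "\<And>i \<omega>. i \<in> I \<Longrightarrow> \<omega> \<in> space M \<Longrightarrow> Y i \<omega> \<in> {a..b}"
    and mean: "\<And>i. i \<in> I \<Longrightarrow> expectation (Y i) = \<mu>"
    and l: "l > 0"
  shows "(\<integral>\<^sup>+\<omega>. ennreal (exp (l * (\<Sum>i\<in>I. \<mu> - Y i \<omega>))) \<partial>M)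
           \<le> ennreal (exp (l\<^sup>2 * (real (card I) * (b - a)\<^sup>2) / 8))"
proof -
  interpret flip: indep_interval_bounded_random_variables M I "\<lambda>i \<omega>. - Y i \<omega>" "\<lambda>_. - b" "\<lambda>_. - a"
    using I bounded by unfold_locales (auto intro: indep_vars_compose2[OF indep] AE_I2)
  have "(\<Sum>i\<in>I. \<mu> - Y i \<omega>) = (\<Sum>i\<in>I. - Y i \<omega> - expectation (\<lambda>\<omega>. - Y i \<omega>))" for \<omega>
    using mean by (intro sum.cong) simp_all
  then show ?thesis
    using flip.nn_integral_exp_sum_centered_le[OF l] by simp
qed

text \<open>The parameter \<open>s\<close> is the Chernoff parameter for a deviation \<open>\<sigma> sqrt (2 ln (1/\<alpha>) / n)\<close> of a
  mean of \<open>n\<close> variables with range \<open>2\<sigma>\<close>: the Hoeffding exponent becomes \<open>ln (1/\<alpha>)\<close>, and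
  \<open>phi\<close> is the deviation at which the Chernoff weight \<open>exp (s * deviation - 2 ln (1/\<alpha>))\<close> equals \<open>u\<close>.\<close>

lemma Chernoff_parameter:
  assumes "\<sigma> > 0" "n > 0" "0 < \<alpha>" "\<alpha> < 1"
    and s: "s = sqrt (2 * n * ln (1 / \<alpha>)) / \<sigma>"
  shows "phi \<sigma> \<alpha> n u = (2 * ln (1 / \<alpha>) + ln u) / s"
    and "(s / n)\<^sup>2 * (n * (2 * \<sigma>)\<^sup>2) / 8 = ln (1 / \<alpha>)"
proof -
  define L where "L = ln (1 / \<alpha>)"
  have L: "L > 0" using assms by (simp add: L_def ln_div)
  have "sqrt (2 * L / n) * sqrt (2 * n * L) = sqrt ((2 * L)\<^sup>2)"
    using assms(2) by (simp add: power2_eq_square field_simps flip: real_sqrt_mult)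
  also have "\<dots> = 2 * L"
    using L by (subst real_sqrt_abs) simp
  finally have root: "sqrt (2 * L / n) * sqrt (2 * n * L) = 2 * L" .
  show "phi \<sigma> \<alpha> n u = (2 * ln (1 / \<alpha>) + ln u) / s"
    using root assms(1,2) L by (simp add: phi_def s L_def[symmetric] field_simps)
  have "s\<^sup>2 = 2 * n * L / \<sigma>\<^sup>2"
    using assms(2) L by (simp add: s L_def power_divide)
  then show "(s / n)\<^sup>2 * (n * (2 * \<sigma>)\<^sup>2) / 8 = ln (1 / \<alpha>)"
    using assms(1,2) by (simp add: L_def power_divide power2_eq_square)
qed

lemma (in prob_space) randomized_Chernoff_bound:
  fixes Y :: "'i \<Rightarrow> 'a \<Rightarrow> real" and U :: "'a \<Rightarrow> real" and a b \<mu> s c :: real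
  assumes I: "finite I" and indep: "indep_vars (\<lambda>_. borel) Y I"
    and bounded: "\<And>i \<omega>. i \<in> I \<Longrightarrow> \<omega> \<in> space M \<Longrightarrow> Y i \<omega> \<in> {a..b}"
    and mean: "\<And>i. i \<in> I \<Longrightarrow> expectation (Y i) = \<mu>"
    and U: "distributed M lborel U (\<lambda>u. ennreal (indicator {0<..<1} u))"
    and independent: "\<And>A B. A \<in> sets (Pi\<^sub>M I (\<lambda>_. borel)) \<Longrightarrow> B \<in> sets borel \<Longrightarrow>
      prob {\<omega> \<in> space M. (\<lambda>i\<in>I. Y i \<omega>) \<in> A \<and> U \<omega> \<in> B} =
      prob {\<omega> \<in> space M. (\<lambda>i\<in>I. Y i \<omega>) \<in> A} * prob {\<omega> \<in> space M. U \<omega> \<in> B}"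
    and "s > 0"
  shows "emeasure M {\<omega> \<in> space M. U \<omega> < exp (s * (\<Sum>i\<in>I. \<mu> - Y i \<omega>) - c)}
           \<le> ennreal (exp (s\<^sup>2 * (real (card I) * (b - a)\<^sup>2) / 8 - c))"
proof -
  define Q where "Q x = exp (s * (\<Sum>i\<in>I. \<mu> - x i) - c)" for x :: "'i \<Rightarrow> real"
  have Q[measurable]: "Q \<in> borel_measurable (Pi\<^sub>M I (\<lambda>_. borel))"
    unfolding Q_def by measurable
  have [measurable]: "Y i \<in> borel_measurable M" if "i \<in> I" for i
    using indep that by (auto simp: indep_vars_def)
  have "emeasure M {\<omega> \<in> space M. U \<omega> < Q (\<lambda>i\<in>I. Y i \<omega>)} \<le> (\<integral>\<^sup>+\<omega>. ennreal (Q (\<lambda>i\<in>I. Y i \<omega>)) \<partial>M)"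
    by (rule emeasure_uniform_less_le_nn_integral[where W="\<lambda>\<omega>. \<lambda>i\<in>I. Y i \<omega>", OF _ U independent Q])
       (simp add: measurable_restrict)
  also have "\<dots> = ennreal (exp (- c)) * (\<integral>\<^sup>+\<omega>. ennreal (exp (s * (\<Sum>i\<in>I. \<mu> - Y i \<omega>))) \<partial>M)"
    by (subst nn_integral_cmult[symmetric])
       (auto intro!: nn_integral_cong simp: Q_def exp_diff exp_minus field_simps simp flip: ennreal_mult)
  also have "\<dots> \<le> ennreal (exp (- c)) * ennreal (exp (s\<^sup>2 * (real (card I) * (b - a)\<^sup>2) / 8))"
    by (intro mult_left_mono nn_integral_exp_sum_lower_deviation_le[OF I indep bounded mean])
       (simp_all add: \<open>s > 0\<close>)
  also have "\<dots> = ennreal (exp (s\<^sup>2 * (real (card I) * (b - a)\<^sup>2) / 8 - c))"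
    by (simp add: mult_exp_exp flip: ennreal_mult)
  finally show ?thesis
    by (simp add: Q_def)
qed

lemma (in prob_space) randomized_Hoeffding_lower:
  fixes Y :: "'i \<Rightarrow> 'a \<Rightarrow> real" and U :: "'a \<Rightarrow> real"
  assumes I: "finite I" "I \<noteq> {}"
    and indep: "indep_vars (\<lambda>_. borel) Y I"
    and bounded: "\<And>i \<omega>. i \<in> I \<Longrightarrow> \<omega> \<in> space M \<Longrightarrow> Y i \<omega> \<in> {a..b}" and "a < b"
    and mean: "\<And>i. i \<in> I \<Longrightarrow> expectation (Y i) = \<mu>"
    and U: "distributed M lborel U (\<lambda>u. ennreal (indicator {0<..<1} u))"
    and independent: "\<And>A B. A \<in> sets (Pi\<^sub>M I (\<lambda>_. borel)) \<Longrightarrow> B \<in> sets borel \<Longrightarrow>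
      prob {\<omega> \<in> space M. (\<lambda>i\<in>I. Y i \<omega>) \<in> A \<and> U \<omega> \<in> B} =
      prob {\<omega> \<in> space M. (\<lambda>i\<in>I. Y i \<omega>) \<in> A} * prob {\<omega> \<in> space M. U \<omega> \<in> B}"
    and \<alpha>: "0 < \<alpha>" "\<alpha> < 1"
  shows "prob {\<omega> \<in> space M. (\<Sum>i\<in>I. Y i \<omega>) / card I + phi ((b - a) / 2) \<alpha> (card I) (U \<omega>) < \<mu>} \<le> \<alpha>"
proof -
  define n where "n = real (card I)"
  define L where "L = ln (1 / \<alpha>)"
  define \<sigma> where "\<sigma> = (b - a) / 2"
  define s where "s = sqrt (2 * n * L) / \<sigma>"
  have n: "n > 0" and L: "L > 0" and \<sigma>: "\<sigma> > 0"
    using I \<alpha> \<open>a < b\<close> by (auto simp: n_def L_def \<sigma>_def card_gt_0_iff ln_div)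
  have s: "s > 0" using n L \<sigma> by (simp add: s_def)
  have range: "b - a = 2 * \<sigma>" by (simp add: \<sigma>_def)
  note Chernoff = Chernoff_parameter[OF \<sigma> n \<alpha> s_def[unfolded L_def]]
  have [measurable]: "Y i \<in> borel_measurable M" if "i \<in> I" for i
    using indep that by (auto simp: indep_vars_def)
  have [measurable]: "U \<in> borel_measurable M"
    using distributed_measurable[OF U] by simp
  have "AE \<omega> in M. (\<Sum>i\<in>I. Y i \<omega>) / n + phi \<sigma> \<alpha> n (U \<omega>) < \<mu> \<longrightarrow>
      U \<omega> < exp (s / n * (\<Sum>i\<in>I. \<mu> - Y i \<omega>) - 2 * L)"
  proof (rule eventually_mono[OF AE_uniform_in_unit_interval[OF U]], safe)
    fix \<omega> assume U01: "U \<omega> \<in> {0<..<1}" and "(\<Sum>i\<in>I. Y i \<omega>) / n + phi \<sigma> \<alpha> n (U \<omega>) < \<mu>"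
    then have "ln (U \<omega>) < s * (\<mu> - (\<Sum>i\<in>I. Y i \<omega>) / n) - 2 * L"
      using s by (simp add: Chernoff(1) L_def field_simps)
    also have "s * (\<mu> - (\<Sum>i\<in>I. Y i \<omega>) / n) = s / n * (\<Sum>i\<in>I. \<mu> - Y i \<omega>)"
      using n by (simp add: sum_subtractf n_def field_simps)
    finally show "U \<omega> < exp (s / n * (\<Sum>i\<in>I. \<mu> - Y i \<omega>) - 2 * L)"
      using U01 by (metis exp_less_cancel_iff exp_ln greaterThanLessThan_iff)
  qed
  then have "emeasure M {\<omega> \<in> space M. (\<Sum>i\<in>I. Y i \<omega>) / n + phi \<sigma> \<alpha> n (U \<omega>) < \<mu>}
      \<le> emeasure M {\<omega> \<in> space M. U \<omega> < exp (s / n * (\<Sum>i\<in>I. \<mu> - Y i \<omega>) - 2 * L)}"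
    by (intro emeasure_mono_AE) auto
  also have "\<dots> \<le> ennreal (exp ((s / n)\<^sup>2 * (n * (2 * \<sigma>)\<^sup>2) / 8 - 2 * L))"
    by (rule randomized_Chernoff_bound[OF I(1) indep bounded mean U independent, of "s / n" "2 * L",
          unfolded range n_def[symmetric]]) (use n s in auto)
  also have "\<dots> = ennreal \<alpha>"
    unfolding Chernoff(2)[folded L_def] using \<alpha> by (simp add: L_def ln_div)
  finally show ?thesis
    using \<alpha> by (simp add: n_def \<sigma>_def emeasure_eq_measure)
qed

lemma expectation_divide_density:
  fixes f h :: "'b \<Rightarrow> real"
  assumes X: "distributed M N X (\<lambda>x. ennreal (h x))" and h: "\<And>x. x \<in> space N \<Longrightarrow> 0 < h x"
    and f[measurable]: "f \<in> borel_measurable N"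
  shows "(\<integral>\<omega>. f (X \<omega>) / h (X \<omega>) \<partial>M) = (\<integral>x. f x \<partial>N)"
proof -
  have [measurable]: "h \<in> borel_measurable N"
    using h X by (intro distributed_real_measurable) (auto intro: less_imp_le)
  have "(\<integral>\<omega>. f (X \<omega>) / h (X \<omega>) \<partial>M) = (\<integral>x. h x * (f x / h x) \<partial>N)"
    using h by (intro distributed_integral[OF X, symmetric]) (auto intro: less_imp_le)
  also have "\<dots> = (\<integral>x. f x \<partial>N)"
    using h by (intro Bochner_Integration.integral_cong) (auto simp: less_imp_neq[symmetric])
  finally show ?thesis .
qed

lemma (in prob_space) importance_sampling_randomized_Hoeffding:
  fixes X :: "'i::finite \<Rightarrow> 'a \<Rightarrow> 'b::euclidean_space" and f h :: "'b \<Rightarrow> real" and U :: "'a \<Rightarrow> real"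
  assumes X: "\<And>k. distributed M lborel (X k) (\<lambda>x. ennreal (h x))" and h: "\<And>x. h x > 0"
    and indep: "indep_vars (\<lambda>_. borel) X UNIV"
    and f[measurable]: "f \<in> borel_measurable borel"
    and "\<rho> > 0" and dominated: "\<And>x. (f x)\<^sup>2 \<le> \<rho> * h x"
    and U: "distributed M lborel U (\<lambda>u. ennreal (indicator {0<..<1} u))"
    and independent: "\<And>A B. A \<in> sets (Pi\<^sub>M UNIV (\<lambda>_. borel)) \<Longrightarrow> B \<in> sets borel \<Longrightarrow>
      prob {\<omega> \<in> space M. (\<lambda>k. X k \<omega>) \<in> A \<and> U \<omega> \<in> B} =
      prob {\<omega> \<in> space M. (\<lambda>k. X k \<omega>) \<in> A} * prob {\<omega> \<in> space M. U \<omega> \<in> B}"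
    and \<alpha>: "0 < \<alpha>" "\<alpha> < 1"
  shows "prob {\<omega> \<in> space M. (\<Sum>k\<in>UNIV. (f (X k \<omega>))\<^sup>2 / h (X k \<omega>)) / CARD('i)
           + phi (\<rho> / 2) \<alpha> CARD('i) (U \<omega>) < (\<integral>x. (f x)\<^sup>2 \<partial>lborel)} \<le> \<alpha>"
proof -
  define g where "g x = (f x)\<^sup>2 / h x" for x
  have [measurable]: "h \<in> borel_measurable borel"
    using distributed_real_measurable[OF _ X] h by (simp add: less_imp_le)
  have [measurable]: "g \<in> borel_measurable borel"
    unfolding g_def by measurable
  have [measurable]: "(\<lambda>\<omega> k. X k \<omega>) \<in> measurable M (Pi\<^sub>M UNIV (\<lambda>_. borel))"
    using distributed_measurable[OF X] by (intro measurable_PiM_single') simp_all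
  have "prob {\<omega> \<in> space M. (\<Sum>k\<in>UNIV. g (X k \<omega>)) / CARD('i)
           + phi ((\<rho> - 0) / 2) \<alpha> CARD('i) (U \<omega>) < (\<integral>x. (f x)\<^sup>2 \<partial>lborel)} \<le> \<alpha>"
  proof (rule randomized_Hoeffding_lower)
    show "indep_vars (\<lambda>_. borel) (\<lambda>k \<omega>. g (X k \<omega>)) UNIV"
      by (rule indep_vars_compose2[OF indep]) simp
    show "g (X k \<omega>) \<in> {0..\<rho>}" for k \<omega>
      using h[of "X k \<omega>"] dominated[of "X k \<omega>"] by (simp add: g_def pos_divide_le_eq)
    show "expectation (\<lambda>\<omega>. g (X k \<omega>)) = (\<integral>x. (f x)\<^sup>2 \<partial>lborel)" for k
      unfolding g_def using h by (intro expectation_divide_density[OF X]) auto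
    show "prob {\<omega> \<in> space M. (\<lambda>k\<in>UNIV. g (X k \<omega>)) \<in> A \<and> U \<omega> \<in> B} =
        prob {\<omega> \<in> space M. (\<lambda>k\<in>UNIV. g (X k \<omega>)) \<in> A} * prob {\<omega> \<in> space M. U \<omega> \<in> B}"
      if "A \<in> sets (Pi\<^sub>M UNIV (\<lambda>_. borel))" "B \<in> sets borel" for A B
    proof (rule prob_product_compose[OF _ _ independent that])
      show "(\<lambda>x. \<lambda>k\<in>UNIV. g (x k)) \<in> measurable (Pi\<^sub>M UNIV (\<lambda>_. borel)) (Pi\<^sub>M UNIV (\<lambda>_. borel))"
        by measurable
    qed measurable
  qed (use \<open>\<rho> > 0\<close> U \<alpha> in auto)
  then show ?thesis
    by (simp add: g_def)
qed

lemma quadratic_form_ge_norm_sq: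
  fixes A :: "real^'n^'n"
  assumes pos_def: "\<And>v. v \<noteq> 0 \<Longrightarrow> 0 < v \<bullet> (A *v v)"
  obtains m where "m > 0" "\<And>v. m * (norm v)\<^sup>2 \<le> v \<bullet> (A *v v)"
proof -
  have "continuous_on (sphere 0 1) (\<lambda>v. v \<bullet> (A *v v))"
    by (intro continuous_intros)
  moreover have "sphere (0 :: real^'n) 1 \<noteq> {}"
    by simp
  ultimately obtain v0 where v0: "v0 \<in> sphere 0 1"
    and min: "\<And>v. v \<in> sphere 0 1 \<Longrightarrow> v0 \<bullet> (A *v v0) \<le> v \<bullet> (A *v v)"
    using continuous_attains_inf[OF compact_sphere] by blast
  show ?thesis
  proof
    show "0 < v0 \<bullet> (A *v v0)" using v0 by (intro pos_def) auto
    fix v :: "real^'n"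
    show "v0 \<bullet> (A *v v0) * (norm v)\<^sup>2 \<le> v \<bullet> (A *v v)"
    proof (cases "v = 0")
      case False
      have "v0 \<bullet> (A *v v0) \<le> (v /\<^sub>R norm v) \<bullet> (A *v (v /\<^sub>R norm v))"
        using False by (intro min) simp
      also have "\<dots> = v \<bullet> (A *v v) / (norm v)\<^sup>2"
        by (simp add: matrix_vector_mult_scaleR power2_eq_square field_simps)
      finally show ?thesis using False by (simp add: pos_le_divide_eq)
    qed simp
  qed
qed

lemma bounded_ellipsoid:
  fixes Z :: "(real^'n::finite) set"
  assumes "is_ellipsoid Z"
  shows "bounded Z"
proof -
  obtain c and A :: "real^'n^'n" where pos_def: "\<And>v. v \<noteq> 0 \<Longrightarrow> 0 < v \<bullet> (A *v v)"
    and Z: "Z = {z. (z - c) \<bullet> (A *v (z - c)) \<le> 1}"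
    using assms unfolding is_ellipsoid_def by blast
  obtain m where m: "m > 0" "\<And>v. m * (norm v)\<^sup>2 \<le> v \<bullet> (A *v v)"
    using quadratic_form_ge_norm_sq[OF pos_def] by blast
  have "Z \<subseteq> cball c (sqrt (1 / m))"
  proof
    fix z assume "z \<in> Z"
    then have "(norm (z - c))\<^sup>2 \<le> 1 / m"
      using m(2)[of "z - c"] m(1) Z by (simp add: pos_le_divide_eq mult.commute)
    then show "z \<in> cball c (sqrt (1 / m))"
      by (simp add: dist_norm norm_minus_commute real_le_rsqrt)
  qed
  then show ?thesis by (rule bounded_subset[OF bounded_cball])
qed

lemma xi_star_upper:
  fixes Z :: "(real^'n::finite) set"
  assumes "bounded Z" and "z \<in> Z"
  shows "(1 / real CARD('n)) * (\<Sum>k\<in>UNIV. (z $ k)\<^sup>2 / h (x k)) \<le> xi_star Z h x"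
  unfolding xi_star_def
proof (rule cSup_upper)
  let ?F = "\<lambda>z :: real^'n. (1 / real CARD('n)) * (\<Sum>k\<in>UNIV. (z $ k)\<^sup>2 / h (x k))"
  show "?F z \<in> ?F ` Z" using assms(2) by (rule imageI)
  have "continuous_on (closure Z) ?F"
    unfolding divide_inverse by (intro continuous_intros)
  then have "compact (?F ` closure Z)"
    using assms(1) by (intro compact_continuous_image) simp_all
  then show "bdd_above (?F ` Z)"
    by (meson bdd_above_mono bounded_imp_bdd_above compact_imp_bounded closure_subset image_mono)
qed

lemma tau_u_less_tau_0:
  assumes "\<rho> > 0" "n > 0" "0 < \<alpha>" "\<alpha> < 1" "0 < u" "u < 1"
  shows "tau_u \<xi> \<rho> \<alpha> n u < tau_0 \<xi> \<rho> \<alpha> n"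
proof -
  define L where "L = ln (1 / \<alpha>)"
  have L: "L > 0" using assms by (simp add: L_def ln_div)
  have "sqrt (2 * L / n) = sqrt (4 * (L / (2 * n)))"
    using assms(2) by simp
  then have "sqrt (2 * L / n) = 2 * sqrt (L / (2 * n))"
    by (simp only: real_sqrt_mult real_sqrt_four)
  then have "\<rho> / 2 * sqrt (2 * L / n) = \<rho> * sqrt (L / (2 * n))"
    by simp
  then have tau_u: "tau_u \<xi> \<rho> \<alpha> n u = tau_0 \<xi> \<rho> \<alpha> n + \<rho> / 2 * ln u / sqrt (2 * n * L)"
    unfolding tau_u_def tau_0_def phi_def L_def[symmetric] by simp
  have "\<rho> / 2 * ln u / sqrt (2 * n * L) < 0"
    using assms L by (simp add: divide_neg_pos mult_pos_neg)
  from add_strict_left_mono[OF this, of "tau_0 \<xi> \<rho> \<alpha> n"] show ?thesis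
    by (simp only: tau_u add_0_right)
qed

lemma (in prob_space) prob_diff_le_of_diff_subset:
  assumes "A \<in> events" "B \<in> events" "C \<in> events" and "A - C \<subseteq> B"
  shows "prob A - prob C \<le> prob B"
proof -
  have "prob A - prob C \<le> prob A - prob (A \<inter> C)"
    using assms by (simp add: finite_measure_mono)
  also have "\<dots> = prob (A - C)"
    using assms by (simp add: finite_measure_Diff')
  also have "\<dots> \<le> prob B"
    using assms by (simp add: finite_measure_mono)
  finally show ?thesis .
qed

theorem mainTheorem1:
  fixes M :: "'w measure"
    and f :: "'a::euclidean_space \<Rightarrow> real"
    and X :: "'n::finite \<Rightarrow> 'w \<Rightarrow> 'a"
    and h :: "'a \<Rightarrow> real"
    and U :: "'w \<Rightarrow> real"
    and Z :: "'w \<Rightarrow> (real^'n) set"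
    and \<eta> \<rho> \<alpha> \<beta> :: real
  assumes "prob_space M"
    and "\<eta> > 0"
    and "paley_wiener \<eta> f"
    and "\<And>x. h x > 0"
    and "\<And>k. distributed M lborel (X k) (\<lambda>x. ennreal (h x))"
    and "prob_space.indep_vars M (\<lambda>_. borel) X UNIV"
    and "\<rho> > 0"
    and "\<And>x. (f x)^2 \<le> \<rho> * h x"
    and "0 < \<beta>" and "\<beta> < 1"
    and "\<And>\<omega>. \<omega> \<in> space M \<Longrightarrow> is_ellipsoid (Z \<omega>)"
    and "prob_space.prob M {\<omega> \<in> space M. (\<chi> k. f (X k \<omega>)) \<in> Z \<omega>} \<ge> 1 - \<beta>"
    and "(\<lambda>\<omega>. xi_star (Z \<omega>) h (\<lambda>k. X k \<omega>)) \<in> borel_measurable M"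
    and "distributed M lborel U (\<lambda>u. ennreal (indicator {0<..<1} u))"
    and "\<And>A B. A \<in> sets (Pi\<^sub>M UNIV (\<lambda>_. borel)) \<Longrightarrow> B \<in> sets borel \<Longrightarrow>
           prob_space.prob M {\<omega> \<in> space M. (\<lambda>k. X k \<omega>) \<in> A \<and> U \<omega> \<in> B} =
           prob_space.prob M {\<omega> \<in> space M. (\<lambda>k. X k \<omega>) \<in> A} * prob_space.prob M {\<omega> \<in> space M. U \<omega> \<in> B}"
    and "0 < \<alpha>" and "\<alpha> < 1"
  shows "prob_space.prob M {\<omega> \<in> space M. pw_norm_sq f \<le>
            tau_u (xi_star (Z \<omega>) h (\<lambda>k. X k \<omega>)) \<rho> \<alpha> (real CARD('n)) (U \<omega>)}
           \<ge> 1 - \<alpha> - \<beta> \<and>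
         prob_space.prob M {\<omega> \<in> space M.
            tau_u (xi_star (Z \<omega>) h (\<lambda>k. X k \<omega>)) \<rho> \<alpha> (real CARD('n)) (U \<omega>)
            < tau_0 (xi_star (Z \<omega>) h (\<lambda>k. X k \<omega>)) \<rho> \<alpha> (real CARD('n))} = 1"
proof -
  interpret prob_space M by fact
  define \<xi> where "\<xi> \<omega> = xi_star (Z \<omega>) h (\<lambda>k. X k \<omega>)" for \<omega>
  define covered where "covered = {\<omega> \<in> space M. (\<chi> k. f (X k \<omega>)) \<in> Z \<omega>}"
  define E where "E = {\<omega> \<in> space M. (\<Sum>k\<in>UNIV. (f (X k \<omega>))\<^sup>2 / h (X k \<omega>)) / CARD('n)
    + phi (\<rho> / 2) \<alpha> CARD('n) (U \<omega>) < pw_norm_sq f}"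
  define B where "B = {\<omega> \<in> space M. pw_norm_sq f \<le> tau_u (\<xi> \<omega>) \<rho> \<alpha> CARD('n) (U \<omega>)}"
  have [measurable]: "f \<in> borel_measurable borel" "h \<in> borel_measurable borel"
    using assms(3) distributed_real_measurable[OF _ assms(5)] assms(4)
    by (simp_all add: paley_wiener_def less_imp_le)
  have [measurable]: "X k \<in> borel_measurable M" "U \<in> borel_measurable M" "\<xi> \<in> borel_measurable M" for k
    using distributed_measurable[OF assms(5)] distributed_measurable[OF assms(14)] assms(13)
    by (simp_all add: \<xi>_def[abs_def])
  have "prob E \<le> \<alpha>"
    unfolding E_def pw_norm_sq_def
    by (rule importance_sampling_randomized_Hoeffding) (use assms in auto)
  \<comment> \<open>\<open>covered\<close> has positive probability, and non-measurable sets have probability 0.\<close>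
  have "covered \<in> events"
    using assms(10,12) measure_notin_sets[of covered M] by (force simp: covered_def)
  moreover have "covered - E \<subseteq> B"
  proof
    fix \<omega> assume \<omega>: "\<omega> \<in> covered - E"
    then have "(\<Sum>k\<in>UNIV. (f (X k \<omega>))\<^sup>2 / h (X k \<omega>)) / CARD('n) \<le> \<xi> \<omega>"
      using xi_star_upper[OF bounded_ellipsoid[OF assms(11)], of \<omega> "\<chi> k. f (X k \<omega>)" h]
      by (simp add: covered_def \<xi>_def)
    with \<omega> show "\<omega> \<in> B" by (auto simp: covered_def E_def B_def tau_u_def)
  qed
  moreover have "E \<in> events"
    unfolding E_def phi_def by measurable
  moreover have "B \<in> events"
    unfolding B_def tau_u_def phi_def by measurable
  ultimately have coverage: "prob B \<ge> 1 - \<alpha> - \<beta>"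
    using prob_diff_le_of_diff_subset[of covered B E] assms(12) \<open>prob E \<le> \<alpha>\<close>
    by (simp add: covered_def)
  have "AE \<omega> in M. tau_u (\<xi> \<omega>) \<rho> \<alpha> CARD('n) (U \<omega>) < tau_0 (\<xi> \<omega>) \<rho> \<alpha> CARD('n)"
    using AE_uniform_in_unit_interval[OF assms(14)]
    by (rule eventually_mono) (auto intro!: tau_u_less_tau_0 assms(7,16,17))
  then have improvement:
    "prob {\<omega> \<in> space M. tau_u (\<xi> \<omega>) \<rho> \<alpha> CARD('n) (U \<omega>) < tau_0 (\<xi> \<omega>) \<rho> \<alpha> CARD('n)} = 1"
    by (subst prob_Collect_eq_1) (simp_all add: tau_u_def tau_0_def phi_def)
  show ?thesis
    using coverage improvement by (simp add: B_def \<xi>_def)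
qed

end
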